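(* Let $(A_n)_{n\ge0}$ be an Appell sequence, i.e. $A_0=1$ and $A_n'=nA_{n-1}$ for $n\ge1$, so that $A_n(x)=\sum_{j=0}^n\binom nj z_jx^{n-j}$ with $z_0=1$ and $z_j=A_j(0)$. For any partition $\lambda$ of size $n$, $$A_\lambda(x)=x^n+\binom n1z_1x^{n-1}+\Big(c(\lambda)(z_2-z_1^2)+\binom n2 z_1^2\Big)x^{n-2}+O(x^{n-3}),$$ i.e. the coefficients of $x^n$, $x^{n-1}$, $x^{n-2}$ in $A_\lambda$ are $1$, $nz_1$ and $c(\lambda)(z_2-z_1^2)+\binom n2z_1^2$ respectively.
   Context: For a partition $\lambda=(\lambda_1\ge\dots\ge\lambda_{\ell(\lambda)}>0)$ with degree vector $n_i=\lambda_i+\ell(\lambda)-i$, the Wronskian Appell polynomial is $A_\lambda=\mathrm{Wr}[A_{n_1},\dots,A_{n_{\ell(\lambda)}}]/\prod_{i<j}(n_j-n_i)$ ($A_\emptyset=1$). The content sum is $c(\lambda)=\sum_{(i,j)\in\lambda}(j-i)$, summed over the boxes $(i,j)$, $1\le i\le\ell(\lambda)$, $1\le j\le\lambda_i$, of the Young diagram. *)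

theory Defs
  imports "HOL-Computational_Algebra.Polynomial" "Jordan_Normal_Form.Determinant"
begin

definition appell :: "(nat \<Rightarrow> 'a::field_char_0 poly) \<Rightarrow> bool" where
  "appell A \<longleftrightarrow> A 0 = 1 \<and> (\<forall>n\<ge>1. pderiv (A n) = smult (of_nat n) (A (n - 1)))"

definition is_partition :: "nat list \<Rightarrow> bool" where
  "is_partition lam \<longleftrightarrow> sorted_wrt (\<ge>) lam \<and> (\<forall>x\<in>set lam. 0 < x)"

text \<open>Degree vector, 0-indexed: n_i = lambda_i + l - 1 - i  (i = 0..l-1),
  i.e. lambda_{i+1} + l - (i+1) in 1-indexed notation.\<close>
definition degvec :: "nat list \<Rightarrow> nat \<Rightarrow> nat" where
  "degvec lam i = lam ! i + length lam - 1 - i"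

definition wronskian :: "nat \<Rightarrow> (nat \<Rightarrow> 'a::idom poly) \<Rightarrow> 'a poly" where
  "wronskian l f = det (mat l l (\<lambda>(i, j). (pderiv ^^ i) (f j)))"

definition wronskian_appell ::
  "(nat \<Rightarrow> 'a::field_char_0 poly) \<Rightarrow> nat list \<Rightarrow> 'a poly" where
  "wronskian_appell A lam =
     (let l = length lam; n = degvec lam in
      smult (inverse (\<Prod>j<l. \<Prod>i<j. of_int (int (n j) - int (n i))))
            (wronskian l (\<lambda>j. A (n j))))"

text \<open>Content sum: sum over boxes (i,j) of j - i (same value with 0-indexing).\<close>
definition content :: "nat list \<Rightarrow> int" where
  "content lam = (\<Sum>i<length lam. \<Sum>j<lam ! i. int j - int i)"

end

theory Submission
  imports Defs
begin

(*
  By the Leibniz formula and D^i A_m = (m)_i A_(m-i), with (m)_i the falling factorial, the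
  Wronskian is a combination of products of Appell polynomials of total degree n = |lambda|, with
  coefficients sgn(p) prod_i (n_p(i))_i.  Reversing the coefficients of such a product shows that
  its three leading coefficients depend on the degrees m_i only through n and sum_i C(m_i, 2).
  The coefficients sum to the Vandermonde determinant of the n_j, which is the normalising
  constant, so it remains to evaluate their weighted sum against sum_i C(n_p(i) - i, 2).
  Multiplying row i of the matrix ((n_j)_i) by n_j gives row i+1 plus i times row i, so for
  i < l - 1 the weighted sum of n_p(i) is i times the Vandermonde determinant; the remaining terms
  are symmetric in the n_j, and the result is the Vandermonde determinant times c(lambda).
*)

section \<open>Appell polynomials\<close>

definition ffact :: "nat \<Rightarrow> 'a::comm_ring_1 \<Rightarrow> 'a" where
  "ffact k x = (\<Prod>i<k. x - of_nat i)"

lemma ffact_Suc: "ffact (Suc k) x = ffact k x * (x - of_nat k)"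
  by (simp add: ffact_def)

lemma ffact_of_nat_eq_0: "m < k \<Longrightarrow> ffact k (of_nat m :: 'a::comm_ring_1) = 0"
  unfolding ffact_def by (rule prod_zero) auto

lemma appell_coeff:
  fixes A :: "nat \<Rightarrow> 'a::field_char_0 poly"
  assumes "appell A"
  shows "coeff (A m) k = of_nat (m choose k) * poly (A (m - k)) 0"
proof (induction m arbitrary: k)
  case 0
  then show ?case using assms by (cases k) (simp_all add: appell_def)
next
  case (Suc m)
  show ?case
  proof (cases k)
    case 0
    then show ?thesis by (simp add: poly_0_coeff_0)
  next
    case (Suc j)
    have "of_nat (Suc j) * coeff (A (Suc m)) (Suc j) = coeff (pderiv (A (Suc m))) j"
      by (simp add: coeff_pderiv)
    also have "\<dots> = of_nat (Suc m * (m choose j)) * poly (A (m - j)) 0"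
      using assms by (simp add: appell_def Suc.IH algebra_simps)
    also have "\<dots> = of_nat (Suc j) * (of_nat (Suc m choose Suc j) * poly (A (m - j)) 0)"
      by (simp only: Suc_times_binomial_eq of_nat_mult ac_simps)
    finally show ?thesis
      using Suc by (simp del: of_nat_Suc)
  qed
qed

lemma appell_pderiv: "appell A \<Longrightarrow> pderiv (A m) = smult (of_nat m) (A (m - 1))"
  by (cases m) (auto simp: appell_def)

lemma
  fixes A :: "nat \<Rightarrow> 'a::field_char_0 poly"
  assumes "appell A"
  shows appell_degree: "degree (A m) = m"
    and appell_lead_coeff: "lead_coeff (A m) = 1"
proof -
  have lead: "coeff (A m) m = 1"
    using assms by (simp add: appell_coeff appell_def)
  moreover have "degree (A m) \<le> m"
    by (rule degree_le) (simp add: appell_coeff[OF assms])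
  ultimately show "degree (A m) = m"
    by (metis le_antisym le_degree one_neq_zero)
  with lead show "lead_coeff (A m) = 1" by simp
qed

lemma coeff_reflect_appell:
  fixes A :: "nat \<Rightarrow> 'a::field_char_0 poly"
  assumes "appell A"
  shows "coeff (reflect_poly (A m)) k = of_nat (m choose k) * poly (A k) 0"
  using assms by (cases "k \<le> m")
    (auto simp: coeff_reflect_poly appell_degree appell_coeff binomial_symmetric[symmetric])

lemma higher_pderiv_appell:
  fixes A :: "nat \<Rightarrow> 'a::field_char_0 poly"
  assumes "appell A"
  shows "(pderiv ^^ i) (A m) = smult (ffact i (of_nat m)) (A (m - i))"
proof (induction i)
  case 0
  then show ?case by (simp add: ffact_def)
next
  case (Suc i)
  have "(pderiv ^^ Suc i) (A m) = smult (ffact i (of_nat m) * of_nat (m - i)) (A (m - Suc i))"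
    using Suc by (simp add: pderiv_smult appell_pderiv[OF assms])
  also have "ffact i (of_nat m) * of_nat (m - i) = (ffact (Suc i) (of_nat m) :: 'a)"
    by (cases "i \<le> m") (simp_all add: ffact_Suc of_nat_diff ffact_of_nat_eq_0)
  finally show ?case .
qed

lemma of_nat_choose_two: "(of_nat (m choose 2) :: 'a::field_char_0) = of_nat m * (of_nat m - 1) / 2"
proof (induction m)
  case (Suc m)
  have "Suc m choose 2 = m + (m choose 2)"
    by (simp add: numeral_2_eq_2)
  with Suc show ?case by (simp add: field_simps)
qed (simp add: numeral_2_eq_2)

lemma low_coeffs_prod_const_one:
  fixes q :: "'b \<Rightarrow> 'a::comm_ring_1 poly"
  assumes "finite I" and "\<And>i. i \<in> I \<Longrightarrow> coeff (q i) 0 = 1"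
  shows "coeff (\<Prod>i\<in>I. q i) 0 = 1"
    and "coeff (\<Prod>i\<in>I. q i) 1 = (\<Sum>i\<in>I. coeff (q i) 1)"
    and "2 * coeff (\<Prod>i\<in>I. q i) 2
           = 2 * (\<Sum>i\<in>I. coeff (q i) 2) + (\<Sum>i\<in>I. coeff (q i) 1)^2 - (\<Sum>i\<in>I. (coeff (q i) 1)^2)"
proof -
  have "coeff (\<Prod>i\<in>I. q i) 0 = 1 \<and> coeff (\<Prod>i\<in>I. q i) 1 = (\<Sum>i\<in>I. coeff (q i) 1)
    \<and> 2 * coeff (\<Prod>i\<in>I. q i) 2
        = 2 * (\<Sum>i\<in>I. coeff (q i) 2) + (\<Sum>i\<in>I. coeff (q i) 1)^2 - (\<Sum>i\<in>I. (coeff (q i) 1)^2)"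
    using assms
  proof (induction I rule: finite_induct)
    case (insert a F)
    define P where "P = (\<Prod>i\<in>F. q i)"
    have "coeff (q a) 0 = 1" and "coeff P 0 = 1" "coeff P 1 = (\<Sum>i\<in>F. coeff (q i) 1)"
      "2 * coeff P 2
         = 2 * (\<Sum>i\<in>F. coeff (q i) 2) + (\<Sum>i\<in>F. coeff (q i) 1)^2 - (\<Sum>i\<in>F. (coeff (q i) 1)^2)"
      using insert by (simp_all add: P_def)
    moreover have "coeff (q a * P) 1 = coeff (q a) 0 * coeff P 1 + coeff (q a) 1 * coeff P 0"
      and "coeff (q a * P) 2
             = coeff (q a) 0 * coeff P 2 + coeff (q a) 1 * coeff P 1 + coeff (q a) 2 * coeff P 0"
      by (simp_all add: coeff_mult numeral_2_eq_2 atMost_Suc)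
    ultimately show ?case
      using insert(1,2) by (simp add: P_def[symmetric] coeff_mult_0 power2_eq_square algebra_simps)
  qed simp
  then show "coeff (\<Prod>i\<in>I. q i) 0 = 1" "coeff (\<Prod>i\<in>I. q i) 1 = (\<Sum>i\<in>I. coeff (q i) 1)"
    "2 * coeff (\<Prod>i\<in>I. q i) 2
       = 2 * (\<Sum>i\<in>I. coeff (q i) 2) + (\<Sum>i\<in>I. coeff (q i) 1)^2 - (\<Sum>i\<in>I. (coeff (q i) 1)^2)"
    by blast+
qed

lemma top_coeffs_prod_appell:
  fixes A :: "nat \<Rightarrow> 'a::field_char_0 poly"
  assumes "appell A" and "finite I" and N: "N = (\<Sum>i\<in>I. m i)"
  defines "z \<equiv> \<lambda>j. poly (A j) 0"
  shows "coeff (\<Prod>i\<in>I. A (m i)) N = 1"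
    and "1 \<le> N \<Longrightarrow> coeff (\<Prod>i\<in>I. A (m i)) (N - 1) = of_nat N * z 1"
    and "2 \<le> N \<Longrightarrow> coeff (\<Prod>i\<in>I. A (m i)) (N - 2)
           = of_nat (N choose 2) * (z 1)^2 + (z 2 - (z 1)^2) * (\<Sum>i\<in>I. of_nat (m i choose 2))"
proof -
  have "A (m i) \<noteq> 0" for i
    using appell_lead_coeff[OF assms(1), of "m i"] by auto
  then have "degree (\<Prod>i\<in>I. A (m i)) = N"
    by (simp add: N degree_prod_eq_sum_degree appell_degree[OF assms(1)])
  then have top: "coeff (\<Prod>i\<in>I. A (m i)) (N - k) = coeff (\<Prod>i\<in>I. reflect_poly (A (m i))) k"
    if "k \<le> N" for k
    using that by (simp add: coeff_reflect_poly flip: reflect_poly_prod)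
  have "coeff (reflect_poly (A (m i))) 0 = 1" for i
    by (simp add: appell_lead_coeff[OF assms(1)])
  note low = low_coeffs_prod_const_one[OF assms(2) this]
  note refl = coeff_reflect_appell[OF assms(1)]
  show "coeff (\<Prod>i\<in>I. A (m i)) N = 1"
    using top[of 0] low(1) by (simp add: refl z_def)
  show "coeff (\<Prod>i\<in>I. A (m i)) (N - 1) = of_nat N * z 1" if "1 \<le> N"
    using top[of 1] low(2) that by (simp add: refl z_def N sum_distrib_right)
  show "coeff (\<Prod>i\<in>I. A (m i)) (N - 2)
      = of_nat (N choose 2) * (z 1)^2 + (z 2 - (z 1)^2) * (\<Sum>i\<in>I. of_nat (m i choose 2))" if "2 \<le> N"
  proof -
    have "2 * coeff (\<Prod>i\<in>I. A (m i)) (N - 2)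
        = 2 * (z 2 * (\<Sum>i\<in>I. of_nat (m i choose 2))) + (of_nat N * z 1)^2
          - (\<Sum>i\<in>I. (of_nat (m i) * z 1)^2)"
      using top[of 2] low(3) that
      by (simp add: refl z_def N sum_distrib_left sum_distrib_right mult_ac)
    also have "\<dots> = 2 * (z 2 * (\<Sum>i\<in>I. of_nat (m i choose 2))) + (of_nat N * z 1)^2
        - (z 1)^2 * (2 * (\<Sum>i\<in>I. of_nat (m i choose 2)) + of_nat N)"
    proof -
      have "(\<Sum>i\<in>I. (of_nat (m i) * z 1)^2) = (z 1)^2 * (\<Sum>i\<in>I. of_nat (m i) * of_nat (m i))"
        by (simp add: sum_distrib_left power_mult_distrib power2_eq_square mult_ac)
      moreover have "2 * (\<Sum>i\<in>I. of_nat (m i choose 2)) + of_nat N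
          = (\<Sum>i\<in>I. of_nat (m i) * of_nat (m i) :: 'a)"
      proof -
        have "2 * of_nat (k choose 2) + of_nat k = (of_nat k * of_nat k :: 'a)" for k
          by (simp add: of_nat_choose_two field_simps)
        then show ?thesis by (simp add: sum_distrib_left N flip: sum.distrib)
      qed
      ultimately show ?thesis by simp
    qed
    also have "\<dots> = 2 * (of_nat (N choose 2) * (z 1)^2
        + (z 2 - (z 1)^2) * (\<Sum>i\<in>I. of_nat (m i choose 2)))"
      by (simp add: of_nat_choose_two field_simps power2_eq_square)
    finally show ?thesis by (metis mult_left_cancel zero_neq_numeral)
  qed
qed

section \<open>Vandermonde determinants\<close>

definition vandermonde :: "(nat \<Rightarrow> 'a::comm_ring_1) \<Rightarrow> nat \<Rightarrow> 'a" where
  "vandermonde x l = (\<Prod>j<l. \<Prod>i<j. x j - x i)"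

definition newton_poly :: "(nat \<Rightarrow> 'a::comm_ring_1) \<Rightarrow> nat \<Rightarrow> 'a poly" where
  "newton_poly x k = (\<Prod>i<k. [:- x i, 1:])"

lemma degree_newton_poly: "degree (newton_poly x k :: 'a::idom poly) = k"
  unfolding newton_poly_def by (subst degree_prod_eq_sum_degree) auto

lemma lead_coeff_newton_poly: "lead_coeff (newton_poly x k :: 'a::idom poly) = 1"
  unfolding newton_poly_def lead_coeff_prod by simp

lemma poly_newton_poly: "poly (newton_poly x k) y = (\<Prod>i<k. y - x i)"
  unfolding newton_poly_def by (simp add: poly_prod)

lemma newton_poly_basis:
  fixes x :: "nat \<Rightarrow> 'a::idom"
  assumes "\<And>n. d \<le> n \<Longrightarrow> coeff p n = 0"
  shows "\<exists>c. p = (\<Sum>k<d. smult (c k) (newton_poly x k))"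
  using assms
proof (induction d arbitrary: p)
  case 0
  then have "p = 0" by (intro poly_eqI) simp
  then show ?case by simp
next
  case (Suc d)
  define p' where "p' = p - smult (coeff p d) (newton_poly x d)"
  have "coeff p' n = 0" if "d \<le> n" for n
  proof (cases "n = d")
    case True
    then show ?thesis
      by (simp add: p'_def lead_coeff_newton_poly[of x d, unfolded degree_newton_poly])
  next
    case False
    with that have "degree (newton_poly x d) < n" by (simp add: degree_newton_poly)
    with False that Suc.prems show ?thesis by (simp add: p'_def coeff_eq_0)
  qed
  then obtain c where "p' = (\<Sum>k<d. smult (c k) (newton_poly x k))"
    using Suc.IH by blast
  then have "p = (\<Sum>k<Suc d. smult ((c(d := coeff p d)) k) (newton_poly x k))"
    by (simp add: p'_def algebra_simps)
  then show ?case by blast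
qed

lemma det_monic_poly_family_eq_vandermonde:
  fixes x :: "nat \<Rightarrow> 'a::idom" and p :: "nat \<Rightarrow> 'a poly"
  assumes deg: "\<And>i. degree (p i) = i" and monic: "\<And>i. lead_coeff (p i) = 1"
  shows "det (mat l l (\<lambda>(i, j). poly (p i) (x j))) = vandermonde x l"
proof -
  have "\<exists>c. p i - newton_poly x i = (\<Sum>k<i. smult (c k) (newton_poly x k))" for i
  proof (rule newton_poly_basis)
    fix n assume "i \<le> n"
    then show "coeff (p i - newton_poly x i) n = 0"
      using deg[of i] monic[of i] lead_coeff_newton_poly[of x i]
      by (cases "n = i") (simp_all add: coeff_eq_0 degree_newton_poly)
  qed
  then obtain C where C: "\<And>i. p i = newton_poly x i + (\<Sum>k<i. smult (C i k) (newton_poly x k))"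
    by (metis diff_eq_eq add.commute)
  \<comment> \<open>Factor the matrix as a unitriangular change of basis times the upper triangular matrix
    of the Newton basis at the nodes x.\<close>
  define L where "L = mat l l (\<lambda>(i, k). if k = i then 1 else if k < i then C i k else 0)"
  define Q where "Q = mat l l (\<lambda>(k, j). poly (newton_poly x k) (x j))"
  have "mat l l (\<lambda>(i, j). poly (p i) (x j)) = L * Q"
  proof (rule eq_matI)
    fix i j assume "i < dim_row (L * Q)" "j < dim_col (L * Q)"
    then have ij: "i < l" "j < l" by (auto simp: L_def Q_def)
    have "(L * Q) $$ (i, j) = (\<Sum>k<l. L $$ (i, k) * Q $$ (k, j))"
      using ij by (simp add: L_def Q_def scalar_prod_def atLeast0LessThan)
    also have "\<dots> = (\<Sum>k<l. (if k = i then poly (newton_poly x i) (x j) else 0)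
                     + (if k < i then C i k * poly (newton_poly x k) (x j) else 0))"
      using ij by (intro sum.cong) (auto simp: L_def Q_def)
    also have "\<dots> = poly (newton_poly x i) (x j)
        + (\<Sum>k \<in> {k \<in> {..<l}. k < i}. C i k * poly (newton_poly x k) (x j))"
      using ij unfolding sum.inter_filter[OF finite_lessThan] by (simp add: sum.distrib)
    also have "{k \<in> {..<l}. k < i} = {..<i}"
      using ij by auto
    also have "poly (newton_poly x i) (x j) + (\<Sum>k<i. C i k * poly (newton_poly x k) (x j))
        = poly (p i) (x j)"
      by (simp add: C[of i] poly_sum)
    finally show "mat l l (\<lambda>(i, j). poly (p i) (x j)) $$ (i, j) = (L * Q) $$ (i, j)"
      using ij by simp
  qed (auto simp: L_def Q_def)
  moreover have "det L = 1"
    by (subst det_lower_triangular[of l]) (auto simp: L_def prod_list_diag_prod)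
  moreover have "det Q = vandermonde x l"
    by (subst det_upper_triangular[of _ l])
      (auto simp: Q_def upper_triangular_def prod_list_diag_prod poly_newton_poly vandermonde_def
        atLeast0LessThan)
  moreover have "L \<in> carrier_mat l l" "Q \<in> carrier_mat l l"
    by (auto simp: L_def Q_def)
  ultimately show ?thesis by (simp add: det_mult)
qed

lemma ffact_eq_poly_newton_poly: "ffact k y = poly (newton_poly of_nat k) y"
  by (simp add: ffact_def poly_newton_poly)

lemma det_ffact_eq_vandermonde:
  "det (mat l l (\<lambda>(i, j). ffact i (x j))) = vandermonde (x :: nat \<Rightarrow> 'a::idom) l"
  unfolding ffact_eq_poly_newton_poly
  by (rule det_monic_poly_family_eq_vandermonde[OF degree_newton_poly lead_coeff_newton_poly])

section \<open>Leibniz sums of the falling factorial matrix\<close>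

definition ffact_term :: "(nat \<Rightarrow> 'a::comm_ring_1) \<Rightarrow> nat \<Rightarrow> (nat \<Rightarrow> nat) \<Rightarrow> 'a" where
  "ffact_term x l p = signof p * (\<Prod>i<l. ffact i (x (p i)))"

lemma ffact_term_of_nat_nonzero_le:
  assumes "ffact_term (\<lambda>j. of_nat (n j)) l p \<noteq> 0" and "i < l"
  shows "i \<le> n (p i)"
proof (rule ccontr)
  assume "\<not> i \<le> n (p i)"
  then have "ffact i (of_nat (n (p i)) :: 'a) = 0"
    by (simp add: ffact_of_nat_eq_0)
  with assms(2) have "(\<Prod>k<l. ffact k (of_nat (n (p k)) :: 'a)) = 0"
    by (intro prod_zero) auto
  with assms(1) show False
    by (simp add: ffact_term_def)
qed

lemma sum_ffact_term:
  "(\<Sum>p | p permutes {..<l}. ffact_term x l p) = vandermonde (x :: nat \<Rightarrow> 'a::idom) l"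
  unfolding det_ffact_eq_vandermonde[of l x, symmetric]
  by (subst det_def'[of _ l]) (auto simp: ffact_term_def atLeast0LessThan)

lemma sum_ffact_term_symmetric:
  fixes x :: "nat \<Rightarrow> 'a::idom"
  shows "(\<Sum>p | p permutes {..<l}. ffact_term x l p * (\<Sum>i<l. g (x (p i))))
       = vandermonde x l * (\<Sum>j<l. g (x j))"
proof -
  have "(\<Sum>i<l. g (x (p i))) = (\<Sum>j<l. g (x j))" if "p permutes {..<l}" for p
    using sum.permute[OF that, of "\<lambda>j. g (x j)"] by (simp add: comp_def)
  then have "(\<Sum>p | p permutes {..<l}. ffact_term x l p * (\<Sum>i<l. g (x (p i))))
      = (\<Sum>p | p permutes {..<l}. ffact_term x l p) * (\<Sum>j<l. g (x j))"
    by (simp add: sum_distrib_right)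
  then show ?thesis by (simp add: sum_ffact_term)
qed

lemma sum_ffact_term_mult_point:
  fixes x :: "nat \<Rightarrow> 'a::idom"
  assumes "Suc i < l"
  shows "(\<Sum>p | p permutes {..<l}. ffact_term x l p * x (p i)) = of_nat i * vandermonde x l"
proof -
  \<comment> \<open>Since ffact i y * y = ffact (Suc i) y + i * ffact i y, multiplying by x (p i) raises row i
    of the falling factorial matrix to a copy of row Suc i, up to i times the original matrix.\<close>
  define F where "F = mat l l (\<lambda>(r, j). ffact (if r = i then Suc i else r) (x j))"
  have "det F = 0"
    by (rule det_identical_rows[of F l i "Suc i"]) (use assms in \<open>auto simp: F_def\<close>)
  moreover have "det F
      = (\<Sum>p | p permutes {..<l}. signof p * (\<Prod>r<l. ffact (if r = i then Suc i else r) (x (p r))))"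
    by (subst det_def'[of _ l])
      (auto simp: F_def atLeast0LessThan permutes_in_image intro!: sum.cong prod.cong)
  moreover have "ffact_term x l p * x (p i)
      = signof p * (\<Prod>r<l. ffact (if r = i then Suc i else r) (x (p r)))
        + of_nat i * ffact_term x l p" for p
  proof -
    have "(\<Prod>r<l. ffact (if r = i then Suc i else r) (x (p r)))
        = (\<Prod>r<l. ffact r (x (p r)) * (if r = i then x (p i) - of_nat i else 1))"
      by (intro prod.cong) (auto simp: ffact_Suc)
    also have "\<dots> = (\<Prod>r<l. ffact r (x (p r))) * (x (p i) - of_nat i)"
      using assms by (simp add: prod.distrib)
    finally have raised: "(\<Prod>r<l. ffact (if r = i then Suc i else r) (x (p r)))
      = (\<Prod>r<l. ffact r (x (p r))) * (x (p i) - of_nat i)" .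
    show ?thesis
      unfolding ffact_term_def raised by (simp add: algebra_simps)
  qed
  ultimately show ?thesis
    by (simp add: sum.distrib sum_ffact_term flip: sum_distrib_left)
qed

lemma sum_ffact_term_index_weighted:
  fixes x :: "nat \<Rightarrow> 'a::idom" and l :: nat
  defines "d \<equiv> l - 1"
  shows "(\<Sum>p | p permutes {..<l}. ffact_term x l p * (\<Sum>i<l. of_nat i * x (p i)))
       = vandermonde x l * (of_nat d * (\<Sum>j<l. x j) - (\<Sum>i<l. of_nat i * of_nat (d - i)))"
proof -
  let ?S = "{p. p permutes {..<l}}"
  have split: "(\<Sum>i<l. of_nat i * x (p i))
      = of_nat d * (\<Sum>i<l. x (p i)) - (\<Sum>i<l. of_nat (d - i) * x (p i))" for p
  proof -
    have "(\<Sum>i<l. of_nat i * x (p i)) = (\<Sum>i<l. of_nat d * x (p i) - of_nat (d - i) * x (p i))"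
      by (intro sum.cong refl) (simp add: d_def of_nat_diff algebra_simps)
    then show ?thesis
      by (simp add: sum_subtractf sum_distrib_left)
  qed
  have weighted: "(\<Sum>i<l. of_nat (d - i) * (\<Sum>p\<in>?S. ffact_term x l p * x (p i)))
      = (\<Sum>i<l. of_nat (d - i) * (of_nat i * vandermonde x l))"
  proof (rule sum.cong)
    fix i assume "i \<in> {..<l}"
    then consider "Suc i < l" | "d - i = 0"
      by (force simp: d_def)
    then show "of_nat (d - i) * (\<Sum>p\<in>?S. ffact_term x l p * x (p i))
        = of_nat (d - i) * (of_nat i * vandermonde x l)"
      by cases (simp_all add: sum_ffact_term_mult_point)
  qed simp
  have "(\<Sum>p\<in>?S. ffact_term x l p * (\<Sum>i<l. of_nat i * x (p i)))
      = of_nat d * (\<Sum>p\<in>?S. ffact_term x l p * (\<Sum>i<l. x (p i)))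
        - (\<Sum>i<l. of_nat (d - i) * (\<Sum>p\<in>?S. ffact_term x l p * x (p i)))"
    by (simp add: split right_diff_distrib sum_subtractf sum_distrib_left sum.swap[of _ ?S] mult_ac)
  also have "\<dots> = of_nat d * (vandermonde x l * (\<Sum>j<l. x j))
      - (\<Sum>i<l. of_nat (d - i) * (of_nat i * vandermonde x l))"
    using sum_ffact_term_symmetric[of x l "\<lambda>y. y"] weighted by simp
  also have "\<dots> = vandermonde x l * (of_nat d * (\<Sum>j<l. x j) - (\<Sum>i<l. of_nat i * of_nat (d - i)))"
    by (simp add: sum_distrib_left algebra_simps)
  finally show ?thesis .
qed

section \<open>Content of a partition\<close>

lemma of_int_content_row:
  "of_int (\<Sum>k<m. int k - int i)
     = (of_nat m * (of_nat m - 1) / 2 - of_nat i * of_nat m :: 'a::field_char_0)"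
  by (induction m) (simp_all add: field_simps)

lemma content_eq_degvec:
  fixes lam :: "nat list"
  defines "l \<equiv> length lam" and "d \<equiv> length lam - 1"
    and "x \<equiv> \<lambda>j. of_nat (degvec lam j) :: 'a::field_char_0"
  shows "of_int (content lam) = (\<Sum>j<l. x j * (x j - 1) / 2)
           - (of_nat d * (\<Sum>j<l. x j) - (\<Sum>i<l. of_nat i * of_nat (d - i)))
           + (\<Sum>i<l. of_nat i * (of_nat i + 1) / 2)"
proof -
  have row: "of_int (\<Sum>k<lam ! i. int k - int i) = x i * (x i - 1) / 2 - of_nat d * x i
      + of_nat i * of_nat (d - i) + of_nat (d - i) * (of_nat (d - i) + 1) / 2"
    if "i < l" for i
  proof -
    define e where "e = (of_nat (d - i) :: 'a)"
    have "x i = of_nat (lam ! i) + e" and "of_nat d = of_nat i + e"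
      using that by (simp_all add: x_def e_def degvec_def d_def l_def flip: of_nat_add)
    then show ?thesis
      unfolding e_def[symmetric] of_int_content_row by (simp add: field_simps)
  qed
  have reflect: "(\<Sum>i<l. of_nat (d - i) * (of_nat (d - i) + 1) / 2)
      = (\<Sum>i<l. of_nat i * (of_nat i + 1) / (2::'a))"
  proof -
    have "d - i = l - Suc i" for i
      by (simp add: d_def l_def)
    then show ?thesis
      using sum.nat_diff_reindex[of "\<lambda>i. of_nat i * (of_nat i + 1) / (2::'a)" l] by (simp only:)
  qed
  have "of_int (content lam) = (\<Sum>i<l. of_int (\<Sum>k<lam ! i. int k - int i) :: 'a)"
    by (simp add: content_def l_def)
  also have "\<dots> = (\<Sum>i<l. x i * (x i - 1) / 2 - of_nat d * x i
      + of_nat i * of_nat (d - i) + of_nat (d - i) * (of_nat (d - i) + 1) / 2)"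
    by (intro sum.cong refl row) simp
  finally show ?thesis
    by (simp add: reflect sum.distrib sum_subtractf sum_distrib_left)
qed

lemma sum_ffact_term_choose_two_degvec:
  fixes lam :: "nat list"
  defines "l \<equiv> length lam" and "x \<equiv> \<lambda>j. of_nat (degvec lam j) :: 'a::field_char_0"
  shows "(\<Sum>p | p permutes {..<l}. ffact_term x l p * (\<Sum>i<l. of_nat (degvec lam (p i) - i choose 2)))
       = vandermonde x l * of_int (content lam)"
proof -
  let ?S = "{p. p permutes {..<l}}"
  \<comment> \<open>The truncated subtraction degvec lam (p i) - i is exact wherever the term does not vanish.\<close>
  have expand: "ffact_term x l p * (\<Sum>i<l. of_nat (degvec lam (p i) - i choose 2))
      = ffact_term x l p * (\<Sum>i<l. x (p i) * (x (p i) - 1) / 2)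
        - ffact_term x l p * (\<Sum>i<l. of_nat i * x (p i))
        + ffact_term x l p * (\<Sum>i<l. of_nat i * (of_nat i + 1) / 2)" for p
  proof (cases "ffact_term x l p = 0")
    case False
    then have "i \<le> degvec lam (p i)" if "i < l" for i
      using ffact_term_of_nat_nonzero_le[of "degvec lam" l p i] that by (simp add: x_def)
    then have "(\<Sum>i<l. of_nat (degvec lam (p i) - i choose 2))
        = (\<Sum>i<l. x (p i) * (x (p i) - 1) / 2) - (\<Sum>i<l. of_nat i * x (p i))
          + (\<Sum>i<l. of_nat i * (of_nat i + 1) / 2)"
      unfolding sum_subtractf[symmetric] sum.distrib[symmetric]
      by (intro sum.cong refl) (simp add: of_nat_choose_two of_nat_diff x_def field_simps)
    then show ?thesis
      by (simp only: distrib_left right_diff_distrib)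
  qed simp
  have "(\<Sum>p\<in>?S. ffact_term x l p * (\<Sum>i<l. of_nat (degvec lam (p i) - i choose 2)))
      = vandermonde x l * (\<Sum>j<l. x j * (x j - 1) / 2)
        - vandermonde x l * (of_nat (l - 1) * (\<Sum>j<l. x j) - (\<Sum>i<l. of_nat i * of_nat (l - 1 - i)))
        + vandermonde x l * (\<Sum>i<l. of_nat i * (of_nat i + 1) / 2)"
    by (simp add: expand sum.distrib sum_subtractf sum_ffact_term sum_ffact_term_index_weighted
        sum_ffact_term_symmetric[of x l "\<lambda>y. y * (y - 1) / 2"] flip: sum_distrib_right)
  also have "\<dots> = vandermonde x l * of_int (content lam)"
    by (simp add: content_eq_degvec l_def x_def algebra_simps)
  finally show ?thesis .
qed

section \<open>The Wronskian of an Appell sequence\<close>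

lemma degvec_strict_decreasing:
  assumes "is_partition lam" and "i < j" and "j < length lam"
  shows "degvec lam j < degvec lam i"
proof -
  have "lam ! j \<le> lam ! i"
    using assms by (simp add: is_partition_def sorted_wrt_iff_nth_less)
  with assms(2,3) show ?thesis
    by (simp add: degvec_def)
qed

lemma vandermonde_degvec_nonzero:
  assumes "is_partition lam"
  shows "vandermonde (\<lambda>j. of_nat (degvec lam j) :: 'a::{idom,ring_char_0}) (length lam) \<noteq> 0"
proof -
  have "of_nat (degvec lam j) - of_nat (degvec lam i) \<noteq> (0::'a)" if "i < j" "j < length lam" for i j
    using degvec_strict_decreasing[OF assms that] by simp
  then show ?thesis
    by (simp add: vandermonde_def prod_zero_iff)
qed

lemma sum_degvec_permuted:
  assumes "p permutes {..<length lam}" and "\<And>i. i < length lam \<Longrightarrow> i \<le> degvec lam (p i)"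
  shows "(\<Sum>i<length lam. degvec lam (p i) - i) = sum_list lam"
proof -
  let ?l = "length lam"
  have "(\<Sum>i<?l. degvec lam (p i) - i) + (\<Sum>i<?l. i) = (\<Sum>i<?l. degvec lam (p i))"
    using assms(2) by (simp flip: sum.distrib)
  also have "\<dots> = (\<Sum>j<?l. degvec lam j)"
    using sum.permute[OF assms(1), of "degvec lam"] by (simp add: comp_def)
  also have "\<dots> = (\<Sum>j<?l. lam ! j) + (\<Sum>j<?l. ?l - Suc j)"
    by (simp add: degvec_def flip: sum.distrib)
  also have "\<dots> = sum_list lam + (\<Sum>i<?l. i)"
    using sum.nat_diff_reindex[of "\<lambda>i. i" ?l] by (simp add: sum_list_sum_nth atLeast0LessThan)
  finally show ?thesis by simp
qed

lemma wronskian_appell_leibniz: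
  fixes A :: "nat \<Rightarrow> 'a::field_char_0 poly" and n :: "nat \<Rightarrow> nat"
  assumes "appell A"
  shows "wronskian l (\<lambda>j. A (n j)) = (\<Sum>p | p permutes {..<l}.
           smult (ffact_term (\<lambda>j. of_nat (n j)) l p) (\<Prod>i<l. A (n (p i) - i)))"
proof -
  have "wronskian l (\<lambda>j. A (n j))
      = (\<Sum>p | p permutes {..<l}. signof p * (\<Prod>i<l. (pderiv ^^ i) (A (n (p i)))))"
    unfolding wronskian_def
    by (subst det_def'[of _ l])
      (auto simp: atLeast0LessThan permutes_in_image intro!: sum.cong prod.cong)
  also have "\<dots> = (\<Sum>p | p permutes {..<l}.
      smult (ffact_term (\<lambda>j. of_nat (n j)) l p) (\<Prod>i<l. A (n (p i) - i)))"
    by (simp add: higher_pderiv_appell[OF assms] prod_smult ffact_term_def of_int_poly mult.commute)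
  finally show ?thesis .
qed

lemma coeff_wronskian_appell:
  fixes A :: "nat \<Rightarrow> 'a::field_char_0 poly" and lam :: "nat list"
  assumes "appell A"
  defines "l \<equiv> length lam" and "x \<equiv> \<lambda>j. of_nat (degvec lam j) :: 'a"
  shows "coeff (wronskian_appell A lam) k = inverse (vandermonde x l)
           * (\<Sum>p | p permutes {..<l}. ffact_term x l p * coeff (\<Prod>i<l. A (degvec lam (p i) - i)) k)"
proof -
  have "(\<Prod>j<l. \<Prod>i<j. of_int (int (degvec lam j) - int (degvec lam i)) :: 'a) = vandermonde x l"
    by (simp add: vandermonde_def x_def)
  then show ?thesis
    by (simp add: wronskian_appell_def Let_def wronskian_appell_leibniz[OF assms(1)] coeff_sum
        x_def flip: l_def)
qed

lemma ffact_term_mult_top_coeffs: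
  fixes A :: "nat \<Rightarrow> 'a::field_char_0 poly" and lam :: "nat list"
  assumes "appell A" and "p permutes {..<length lam}"
  defines "l \<equiv> length lam" and "n \<equiv> sum_list lam" and "x \<equiv> \<lambda>j. of_nat (degvec lam j) :: 'a"
    and "z \<equiv> \<lambda>j. poly (A j) 0"
  shows "ffact_term x l p * coeff (\<Prod>i<l. A (degvec lam (p i) - i)) n = ffact_term x l p"
    and "1 \<le> n \<Longrightarrow> ffact_term x l p * coeff (\<Prod>i<l. A (degvec lam (p i) - i)) (n - 1)
           = ffact_term x l p * (of_nat n * z 1)"
    and "2 \<le> n \<Longrightarrow> ffact_term x l p * coeff (\<Prod>i<l. A (degvec lam (p i) - i)) (n - 2)
           = ffact_term x l p * (of_nat (n choose 2) * (z 1)^2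
               + (z 2 - (z 1)^2) * (\<Sum>i<l. of_nat (degvec lam (p i) - i choose 2)))"
proof -
  have "n = (\<Sum>i<l. degvec lam (p i) - i)" if "ffact_term x l p \<noteq> 0"
    using sum_degvec_permuted[OF assms(2)] ffact_term_of_nat_nonzero_le[OF that[unfolded x_def]]
    by (simp add: n_def l_def)
  note top = top_coeffs_prod_appell[OF assms(1) finite_lessThan this]
  show "ffact_term x l p * coeff (\<Prod>i<l. A (degvec lam (p i) - i)) n = ffact_term x l p"
    using top by (cases "ffact_term x l p = 0") auto
  show "ffact_term x l p * coeff (\<Prod>i<l. A (degvec lam (p i) - i)) (n - 1)
      = ffact_term x l p * (of_nat n * z 1)" if "1 \<le> n"
    using that top by (cases "ffact_term x l p = 0") (auto simp: z_def)
  show "ffact_term x l p * coeff (\<Prod>i<l. A (degvec lam (p i) - i)) (n - 2)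
      = ffact_term x l p * (of_nat (n choose 2) * (z 1)^2
          + (z 2 - (z 1)^2) * (\<Sum>i<l. of_nat (degvec lam (p i) - i choose 2)))" if "2 \<le> n"
    using that top by (cases "ffact_term x l p = 0") (auto simp: z_def)
qed

lemma sum_ffact_term_top_coeffs:
  fixes A :: "nat \<Rightarrow> 'a::field_char_0 poly" and lam :: "nat list"
  assumes "appell A"
  defines "l \<equiv> length lam" and "n \<equiv> sum_list lam" and "x \<equiv> \<lambda>j. of_nat (degvec lam j) :: 'a"
    and "z \<equiv> \<lambda>j. poly (A j) 0"
  shows "(\<Sum>p | p permutes {..<l}. ffact_term x l p * coeff (\<Prod>i<l. A (degvec lam (p i) - i)) n)
           = vandermonde x l"
    and "1 \<le> n \<Longrightarrow>
         (\<Sum>p | p permutes {..<l}. ffact_term x l p * coeff (\<Prod>i<l. A (degvec lam (p i) - i)) (n - 1))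
           = vandermonde x l * (of_nat n * z 1)"
    and "2 \<le> n \<Longrightarrow>
         (\<Sum>p | p permutes {..<l}. ffact_term x l p * coeff (\<Prod>i<l. A (degvec lam (p i) - i)) (n - 2))
           = vandermonde x l
             * (of_int (content lam) * (z 2 - (z 1)^2) + of_nat (n choose 2) * (z 1)^2)"
proof -
  let ?t = "ffact_term x l"
  let ?P = "\<lambda>p. \<Prod>i<l. A (degvec lam (p i) - i)"
  let ?S = "{p. p permutes {..<l}}"
  have z_eq: "poly (A j) 0 = z j" for j
    by (simp add: z_def)
  note top = ffact_term_mult_top_coeffs[OF assms(1), where lam = lam, folded l_def x_def n_def,
      unfolded z_eq]
  show "(\<Sum>p\<in>?S. ?t p * coeff (?P p) n) = vandermonde x l"
    by (simp add: top(1) sum_ffact_term)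
  show "(\<Sum>p\<in>?S. ?t p * coeff (?P p) (n - 1)) = vandermonde x l * (of_nat n * z 1)" if "1 \<le> n"
  proof -
    have "(\<Sum>p\<in>?S. ?t p * coeff (?P p) (n - 1)) = (\<Sum>p\<in>?S. ?t p) * (of_nat n * z 1)"
      unfolding sum_distrib_right by (intro sum.cong refl top(2) that) simp
    then show ?thesis
      by (simp add: sum_ffact_term)
  qed
  show "(\<Sum>p\<in>?S. ?t p * coeff (?P p) (n - 2))
      = vandermonde x l * (of_int (content lam) * (z 2 - (z 1)^2) + of_nat (n choose 2) * (z 1)^2)"
    if "2 \<le> n"
  proof -
    have "(\<Sum>p\<in>?S. ?t p * coeff (?P p) (n - 2))
        = (\<Sum>p\<in>?S. ?t p * (of_nat (n choose 2) * (z 1)^2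
            + (z 2 - (z 1)^2) * (\<Sum>i<l. of_nat (degvec lam (p i) - i choose 2))))"
      by (intro sum.cong refl top(3) that) simp
    also have "\<dots> = (\<Sum>p\<in>?S. ?t p) * (of_nat (n choose 2) * (z 1)^2)
        + (z 2 - (z 1)^2) * (\<Sum>p\<in>?S. ?t p * (\<Sum>i<l. of_nat (degvec lam (p i) - i choose 2)))"
      by (simp add: distrib_left sum.distrib sum_distrib_right sum_distrib_left mult_ac)
    also have "\<dots> = vandermonde x l
        * (of_int (content lam) * (z 2 - (z 1)^2) + of_nat (n choose 2) * (z 1)^2)"
      using sum_ffact_term_choose_two_degvec[of lam, where 'a = 'a, folded l_def x_def]
      by (simp add: sum_ffact_term algebra_simps)
    finally show ?thesis .
  qed
qed

theorem propositionA2: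
  fixes A :: "nat \<Rightarrow> 'a::field_char_0 poly" and lam :: "nat list"
  assumes "appell A" and "is_partition lam"
  defines "n \<equiv> sum_list lam"
      and "z \<equiv> (\<lambda>j. poly (A j) 0)"
  shows "coeff (wronskian_appell A lam) n = 1
    \<and> (n \<ge> 1 \<longrightarrow> coeff (wronskian_appell A lam) (n - 1) = of_nat n * z 1)
    \<and> (n \<ge> 2 \<longrightarrow> coeff (wronskian_appell A lam) (n - 2)
          = of_int (content lam) * (z 2 - (z 1)\<^sup>2) + of_nat (n choose 2) * (z 1)\<^sup>2)"
proof -
  define l where "l = length lam"
  define x where "x = (\<lambda>j. of_nat (degvec lam j) :: 'a)"
  have "vandermonde x l \<noteq> 0"
    unfolding x_def l_def by (rule vandermonde_degvec_nonzero[OF assms(2)])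
  moreover note coeff_wronskian_appell[OF assms(1), where lam = lam, folded l_def x_def]
  moreover note sum_ffact_term_top_coeffs[OF assms(1), where lam = lam, folded l_def x_def n_def]
  ultimately show ?thesis
    by (simp add: z_def)
qed

end
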